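(* Let $p$ be a prime, $d\ge2$, $1\le k<d$, and write $x=(x_1,x_2)\in\mathbb{Z}_p^k\times\mathbb{Z}_p^{d-k}$. Let $A=\mathbb{Z}_p^k\times\{0\}\subseteq\mathbb{Z}_p^d$ and $B=\{0\}\times\mathbb{Z}_p^{d-k}\subseteq\mathbb{Z}_p^d$, and let $g\in L^2(\mathbb{Z}_p^d)$ with $\|g\|_2=1$. Then the Gabor system $\mathcal{G}(g,A,B)$ is an orthonormal basis of $L^2(\mathbb{Z}_p^d)$ if and only if both of the following hold: (a) for every $x_2\in\mathbb{Z}_p^{d-k}$, the function $m\mapsto\left|\sum_{x_1\in\mathbb{Z}_p^k}g(x_1,x_2)\chi(-x_1\cdot m)\right|$ is constant on $\mathbb{Z}_p^k$ (the constant may depend on $x_2$); (b) the function $x_2\mapsto\sum_{x_1\in\mathbb{Z}_p^k}|g(x_1,x_2)|^2$ is constant on $\mathbb{Z}_p^{d-k}$.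
   Context: $\mathbb{Z}_p^n$ is the $n$-dimensional vector space over the field $\mathbb{Z}_p$ ($p$ prime), $x\cdot b=\sum_i x_ib_i$, and $\chi(t)=e^{2\pi i t/p}$. $L^2(\mathbb{Z}_p^d)$ is the space of functions $\mathbb{Z}_p^d\to\mathbb{C}$ with inner product $\langle f,h\rangle=\sum_{x} f(x)\overline{h(x)}$. The Gabor system is $\mathcal{G}(g,A,B)=\{x\mapsto g(x-a)\chi(x\cdot b)\}_{a\in A,\ b\in B}$. *)

theory Defs
  imports Complex_Main "HOL-Computational_Algebra.Primes"
begin

text \<open>Elements of Z_p^d are encoded as functions nat => int with entries in
  {0..<p} at coordinates i < d and 0 at coordinates i >= d.\<close>

definition Zpv :: "nat \<Rightarrow> nat \<Rightarrow> (nat \<Rightarrow> int) set" where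
  "Zpv p d = {x. (\<forall>i<d. 0 \<le> x i \<and> x i < int p) \<and> (\<forall>i\<ge>d. x i = 0)}"

definition vsub :: "nat \<Rightarrow> (nat \<Rightarrow> int) \<Rightarrow> (nat \<Rightarrow> int) \<Rightarrow> (nat \<Rightarrow> int)" where
  "vsub p x y = (\<lambda>i. (x i - y i) mod int p)"

definition vadd :: "nat \<Rightarrow> (nat \<Rightarrow> int) \<Rightarrow> (nat \<Rightarrow> int) \<Rightarrow> (nat \<Rightarrow> int)" where
  "vadd p x y = (\<lambda>i. (x i + y i) mod int p)"

definition dotp :: "nat \<Rightarrow> (nat \<Rightarrow> int) \<Rightarrow> (nat \<Rightarrow> int) \<Rightarrow> int" where
  "dotp d x y = (\<Sum>i<d. x i * y i)"

definition chi :: "nat \<Rightarrow> int \<Rightarrow> complex" where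
  "chi p t = exp (2 * of_real pi * \<i> * of_int t / of_nat p)"

definition l2inner :: "(nat \<Rightarrow> int) set \<Rightarrow> ((nat \<Rightarrow> int) \<Rightarrow> complex) \<Rightarrow> ((nat \<Rightarrow> int) \<Rightarrow> complex) \<Rightarrow> complex" where
  "l2inner V f h = (\<Sum>x\<in>V. f x * cnj (h x))"

definition gabor_atom :: "nat \<Rightarrow> nat \<Rightarrow> ((nat \<Rightarrow> int) \<Rightarrow> complex) \<Rightarrow> (nat \<Rightarrow> int) \<Rightarrow> (nat \<Rightarrow> int) \<Rightarrow> (nat \<Rightarrow> int) \<Rightarrow> complex" where
  "gabor_atom p d g a b = (\<lambda>x. g (vsub p x a) * chi p (dotp d x b))"

definition is_onb :: "(nat \<Rightarrow> int) set \<Rightarrow> 'i set \<Rightarrow> ('i \<Rightarrow> (nat \<Rightarrow> int) \<Rightarrow> complex) \<Rightarrow> bool" where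
  "is_onb V I e \<longleftrightarrow>
     (\<forall>i\<in>I. \<forall>j\<in>I. l2inner V (e i) (e j) = (if i = j then 1 else 0)) \<and>
     (\<forall>f. \<exists>c. \<forall>x\<in>V. f x = (\<Sum>i\<in>I. c i * e i x))"

definition gabor_onb :: "nat \<Rightarrow> nat \<Rightarrow> ((nat \<Rightarrow> int) \<Rightarrow> complex) \<Rightarrow> (nat \<Rightarrow> int) set \<Rightarrow> (nat \<Rightarrow> int) set \<Rightarrow> bool" where
  "gabor_onb p d g A B = is_onb (Zpv p d) (A \<times> B) (\<lambda>(a, b). gabor_atom p d g a b)"

end

theory Submission
  imports Defs "HOL-Analysis.Complex_Transcendental"
begin

text \<open>Write \<open>x = (x\<^sub>1, x\<^sub>2)\<close> and let \<open>R\<^sub>x\<^sub>2\<close> be the autocorrelation of the fiber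
  \<open>g(\<cdot>, x\<^sub>2)\<close> on \<open>\<int>\<^sub>p\<^sup>k\<close>. The Gram matrix of the Gabor system is
  \<open>\<langle>e(a,b), e(a',b')\<rangle> = \<Sum>\<^sub>x\<^sub>2 R\<^sub>x\<^sub>2(a - a') \<chi>(x\<^sub>2\<cdot>(b - b'))\<close>, so by Fourier inversion in \<open>x\<^sub>2\<close>
  the system is orthonormal iff every \<open>R\<^sub>x\<^sub>2\<close> is the delta at \<open>0\<close> of mass \<open>p\<^sup>-\<^sup>(\<^sup>d\<^sup>-\<^sup>k\<^sup>)\<close>; in that
  case the reproducing kernel \<open>\<Sum> e(x) cnj(e(y))\<close> is also a delta, which gives completeness.
  Since \<open>R\<^sub>x\<^sub>2\<close> has Fourier transform \<open>|\<F>g(\<cdot>, x\<^sub>2)|\<^sup>2\<close>, it vanishes off \<open>0\<close> iff (a) holds,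
  and \<open>R\<^sub>x\<^sub>2(0) = \<Sum>\<^sub>x\<^sub>1 |g(x\<^sub>1, x\<^sub>2)|\<^sup>2\<close>, which for \<open>\<parallel>g\<parallel> = 1\<close> is \<open>p\<^sup>-\<^sup>(\<^sup>d\<^sup>-\<^sup>k\<^sup>)\<close> for all \<open>x\<^sub>2\<close>
  iff it is independent of \<open>x\<^sub>2\<close>, i.e. iff (b) holds.\<close>

lemma chi_add: "chi p (s + t) = chi p s * chi p t"
  unfolding chi_def by (simp add: exp_add[symmetric] add_divide_distrib distrib_left distrib_right)

lemma chi_0 [simp]: "chi p 0 = 1"
  unfolding chi_def by simp

lemma cnj_chi: "cnj (chi p t) = chi p (- t)"
  unfolding chi_def by (simp add: exp_cnj)

lemma chi_eq_1_iff:
  assumes "p > 0"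
  shows "chi p t = 1 \<longleftrightarrow> int p dvd t"
proof -
  have "chi p t = 1 \<longleftrightarrow> (\<exists>n::int. 2 * pi * of_int t / of_nat p = of_int (2 * n) * pi)"
    unfolding chi_def exp_eq_1 by simp
  also have "\<dots> \<longleftrightarrow> (\<exists>n::int. real_of_int t = of_int n * of_nat p)"
    using assms by (intro ex_cong1) (auto simp: field_simps)
  also have "\<dots> \<longleftrightarrow> (\<exists>n::int. t = n * int p)"
    by (metis of_int_eq_iff of_int_mult of_int_of_nat_eq)
  also have "\<dots> \<longleftrightarrow> int p dvd t"
    by (auto simp: dvd_def mult.commute)
  finally show ?thesis .
qed

lemma chi_cong:
  assumes "p > 0" "int p dvd (s - t)"
  shows "chi p s = chi p t"
proof -
  have "chi p s = chi p (t + (s - t))" by simp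
  also have "\<dots> = chi p t"
    using chi_eq_1_iff[OF assms(1)] assms(2) by (simp only: chi_add) simp
  finally show ?thesis .
qed

lemma dotp_commute: "dotp d x y = dotp d y x"
  by (simp add: dotp_def mult.commute)

lemma dotp_diff: "dotp d x m - dotp d y m = dotp d m (\<lambda>i. x i - y i)"
  by (simp add: dotp_def sum_subtractf[symmetric] algebra_simps)

lemma dotp_diff_right: "dotp d x b - dotp d x b' = dotp d x (\<lambda>i. b i - b' i)"
  by (simp add: dotp_def sum_subtractf[symmetric] algebra_simps)

lemma dotp_zero [simp]: "dotp d x (\<lambda>i. 0) = 0"
  by (simp add: dotp_def)

definition Zpv_on :: "nat \<Rightarrow> nat set \<Rightarrow> (nat \<Rightarrow> int) set" where
  "Zpv_on p J = {x. (\<forall>i\<in>J. 0 \<le> x i \<and> x i < int p) \<and> (\<forall>i. i \<notin> J \<longrightarrow> x i = 0)}"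

lemma Zpv_eq_Zpv_on: "Zpv p d = Zpv_on p {..<d}"
  by (auto simp: Zpv_def Zpv_on_def)

lemma finite_Zpv_on:
  assumes "finite J"
  shows "finite (Zpv_on p J)"
proof -
  have "Zpv_on p J \<subseteq> (\<lambda>f i. if i \<in> J then f i else 0) ` PiE J (\<lambda>_. {0..<int p})"
  proof
    fix x assume x: "x \<in> Zpv_on p J"
    have "x = (\<lambda>i. if i \<in> J then restrict x J i else 0)"
      and "restrict x J \<in> PiE J (\<lambda>_. {0..<int p})"
      using x by (auto simp: Zpv_on_def)
    then show "x \<in> (\<lambda>f i. if i \<in> J then f i else 0) ` PiE J (\<lambda>_. {0..<int p})" by blast
  qed
  moreover have "finite (PiE J (\<lambda>_. {0..<int p}))" using assms by (intro finite_PiE) auto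
  ultimately show ?thesis by (meson finite_imageI finite_subset)
qed

lemma zero_in_Zpv_on [simp]: "(\<lambda>i. 0) \<in> Zpv_on p J \<longleftrightarrow> p > 0 \<or> J = {}"
  by (auto simp: Zpv_on_def)

lemma card_Zpv_on_pos: "finite J \<Longrightarrow> p > 0 \<Longrightarrow> card (Zpv_on p J) > 0"
  using finite_Zpv_on[of J p] zero_in_Zpv_on[of p J] by (metis card_gt_0_iff empty_iff)

lemma vsub_in_Zpv_on: "p > 0 \<Longrightarrow> x \<in> Zpv_on p J \<Longrightarrow> y \<in> Zpv_on p J \<Longrightarrow> vsub p x y \<in> Zpv_on p J"
  by (auto simp: Zpv_on_def vsub_def)

lemma vadd_in_Zpv_on: "p > 0 \<Longrightarrow> x \<in> Zpv_on p J \<Longrightarrow> y \<in> Zpv_on p J \<Longrightarrow> vadd p x y \<in> Zpv_on p J"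
  by (auto simp: Zpv_on_def vadd_def)

lemma Zpv_on_mod: "x \<in> Zpv_on p J \<Longrightarrow> x i mod int p = x i"
  by (cases "i \<in> J") (auto simp: Zpv_on_def)

lemma vsub_vadd: "x \<in> Zpv_on p J \<Longrightarrow> vsub p (vadd p x y) y = x"
  using Zpv_on_mod[of x p J] by (auto simp: vsub_def vadd_def mod_diff_left_eq)

lemma vadd_vsub: "x \<in> Zpv_on p J \<Longrightarrow> vadd p (vsub p x y) y = x"
  using Zpv_on_mod[of x p J] by (auto simp: vsub_def vadd_def mod_add_left_eq)

lemma vsub_vsub: "a \<in> Zpv_on p J \<Longrightarrow> vsub p x (vsub p x a) = a"
  using Zpv_on_mod[of a p J] by (auto simp: vsub_def mod_diff_right_eq)

lemma vsub_zero: "x \<in> Zpv_on p J \<Longrightarrow> vsub p x (\<lambda>i. 0) = x"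
  using Zpv_on_mod[of x p J] by (auto simp: vsub_def)

lemma Zpv_on_eq_iff_dvd:
  assumes "x \<in> Zpv_on p J" "y \<in> Zpv_on p J"
  shows "x = y \<longleftrightarrow> (\<forall>i\<in>J. int p dvd (x i - y i))"
proof
  assume dvd: "\<forall>i\<in>J. int p dvd (x i - y i)"
  show "x = y"
  proof
    fix i show "x i = y i"
    proof (cases "i \<in> J")
      case True
      then have "x i mod int p = y i mod int p" using dvd by (simp add: mod_eq_dvd_iff)
      then show ?thesis using Zpv_on_mod[OF assms(1)] Zpv_on_mod[OF assms(2)] by simp
    qed (use assms in \<open>auto simp: Zpv_on_def\<close>)
  qed
qed simp

lemma vsub_eq_0_iff:
  assumes "x \<in> Zpv_on p J" "y \<in> Zpv_on p J"
  shows "vsub p x y = (\<lambda>i. 0) \<longleftrightarrow> x = y"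
proof
  assume "vsub p x y = (\<lambda>i. 0)"
  then have "\<forall>i. (x i - y i) mod int p = 0" by (metis vsub_def)
  then show "x = y" by (auto simp: Zpv_on_eq_iff_dvd[OF assms] dvd_eq_mod_eq_0)
qed (simp add: vsub_def)

lemma sum_vadd_shift:
  assumes "p > 0" "u \<in> Zpv_on p J"
  shows "(\<Sum>x\<in>Zpv_on p J. h (vadd p x u)) = (\<Sum>x\<in>Zpv_on p J. h x)"
  by (rule sum.reindex_bij_witness[where i="\<lambda>x. vsub p x u" and j="\<lambda>x. vadd p x u"])
     (use assms in \<open>auto simp: vsub_vadd vadd_vsub vsub_in_Zpv_on vadd_in_Zpv_on\<close>)

lemma sum_vsub_reflect:
  assumes "p > 0" "x \<in> Zpv_on p J"
  shows "(\<Sum>a\<in>Zpv_on p J. h (vsub p x a)) = (\<Sum>a\<in>Zpv_on p J. h a)"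
  by (rule sum.reindex_bij_witness[where i="\<lambda>a. vsub p x a" and j="\<lambda>a. vsub p x a"])
     (use assms in \<open>auto simp: vsub_vsub vsub_in_Zpv_on\<close>)

lemma chi_dotp_vsub:
  assumes "p > 0"
  shows "chi p (dotp d (vsub p x y) m) = chi p (dotp d x m - dotp d y m)"
proof (rule chi_cong[OF assms])
  have "dotp d (vsub p x y) m - (dotp d x m - dotp d y m)
      = (\<Sum>i<d. ((x i - y i) mod int p - (x i - y i)) * m i)"
    by (simp add: dotp_def vsub_def sum_subtractf[symmetric] algebra_simps)
  also have "int p dvd \<dots>"
    by (intro dvd_sum dvd_mult2) (metis mod_mod_trivial mod_eq_dvd_iff)
  finally show "int p dvd dotp d (vsub p x y) m - (dotp d x m - dotp d y m)" .
qed

lemma chi_dotp_vadd: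
  assumes "p > 0"
  shows "chi p (dotp d (vadd p x y) m) = chi p (dotp d x m + dotp d y m)"
proof (rule chi_cong[OF assms])
  have "dotp d (vadd p x y) m - (dotp d x m + dotp d y m)
      = (\<Sum>i<d. ((x i + y i) mod int p - (x i + y i)) * m i)"
    by (simp add: dotp_def vadd_def sum_subtractf[symmetric] sum.distrib[symmetric] algebra_simps)
  also have "int p dvd \<dots>"
    by (intro dvd_sum dvd_mult2) (metis mod_mod_trivial mod_eq_dvd_iff)
  finally show "int p dvd dotp d (vadd p x y) m - (dotp d x m + dotp d y m)" .
qed

lemma sum_chi_dotp:
  assumes p2: "p \<ge> 2" and J: "finite J" "J \<subseteq> {..<d}"
  shows "(\<Sum>x\<in>Zpv_on p J. chi p (dotp d x c)) =
         (if \<forall>i\<in>J. int p dvd c i then of_nat (card (Zpv_on p J)) else 0)"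
proof (cases "\<forall>i\<in>J. int p dvd c i")
  case True
  have "chi p (dotp d x c) = 1" if x: "x \<in> Zpv_on p J" for x
  proof -
    have "int p dvd x i * c i" for i
      using True x by (cases "i \<in> J") (auto simp: Zpv_on_def)
    then have "int p dvd dotp d x c" unfolding dotp_def by (intro dvd_sum)
    then show ?thesis using chi_eq_1_iff p2 by simp
  qed
  then show ?thesis using True by simp
next
  case False
  then obtain i0 where i0: "i0 \<in> J" "\<not> int p dvd c i0" by blast
  define e where "e = (\<lambda>i. if i = i0 then 1 else 0::int)"
  have e: "e \<in> Zpv_on p J" using i0 p2 by (auto simp: Zpv_on_def e_def)
  have dotp_e: "dotp d x e = x i0" for x
    using i0 J by (simp add: dotp_def e_def if_distrib cong: if_cong) (auto simp: sum.delta)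
  let ?S = "\<Sum>x\<in>Zpv_on p J. chi p (dotp d x c)"
  \<comment> \<open>translating by the unit vector \<open>e\<close> multiplies the sum by \<open>\<chi>(c\<^sub>i\<^sub>0) \<noteq> 1\<close>\<close>
  have "?S = (\<Sum>x\<in>Zpv_on p J. chi p (dotp d (vadd p x e) c))"
    using sum_vadd_shift[OF _ e, of "\<lambda>x. chi p (dotp d x c)"] p2 by simp
  also have "\<dots> = chi p (c i0) * ?S"
    using p2 by (simp add: chi_dotp_vadd chi_add dotp_commute[of d e c] dotp_e
        sum_distrib_left mult.commute)
  finally have "(1 - chi p (c i0)) * ?S = 0" by (simp add: algebra_simps)
  moreover have "chi p (c i0) \<noteq> 1" using i0 p2 chi_eq_1_iff by simp
  ultimately show ?thesis using False by auto
qed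

lemma fourier_inversion:
  assumes p2: "p \<ge> 2" and J: "finite J" "J \<subseteq> {..<d}" and y: "y \<in> Zpv_on p J"
  shows "(\<Sum>m\<in>Zpv_on p J. (\<Sum>x\<in>Zpv_on p J. F x * chi p (dotp d x m)) * chi p (- dotp d y m))
         = of_nat (card (Zpv_on p J)) * F y"
proof -
  let ?S = "Zpv_on p J"
  have "(\<Sum>m\<in>?S. (\<Sum>x\<in>?S. F x * chi p (dotp d x m)) * chi p (- dotp d y m))
      = (\<Sum>x\<in>?S. F x * (\<Sum>m\<in>?S. chi p (dotp d m (\<lambda>i. x i - y i))))"
    by (simp add: sum_distrib_right mult.assoc chi_add[symmetric] dotp_diff[symmetric])
       (subst sum.swap, simp add: sum_distrib_left)
  also have "\<dots> = (\<Sum>x\<in>?S. if x = y then of_nat (card ?S) * F y else 0)"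
    by (intro sum.cong refl) (simp add: sum_chi_dotp[OF p2 J] Zpv_on_eq_iff_dvd[OF _ y, symmetric])
  also have "\<dots> = of_nat (card ?S) * F y" using y finite_Zpv_on[OF J(1)] by simp
  finally show ?thesis .
qed

lemma fourier_delta_imp_const:
  assumes p2: "p \<ge> 2" and J: "finite J" "J \<subseteq> {..<d}"
    and F: "\<forall>m\<in>Zpv_on p J. (\<Sum>x\<in>Zpv_on p J. F x * chi p (dotp d x m)) = (if m = (\<lambda>i. 0) then K else 0)"
    and y: "y \<in> Zpv_on p J"
  shows "F y = K / of_nat (card (Zpv_on p J))"
proof -
  have "of_nat (card (Zpv_on p J)) * F y
     = (\<Sum>m\<in>Zpv_on p J. (if m = (\<lambda>i. 0) then K else 0) * chi p (- dotp d y m))"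
    using fourier_inversion[OF p2 J y, of F] F by simp
  also have "\<dots> = (\<Sum>m\<in>Zpv_on p J. if m = (\<lambda>i. 0) then K else 0)"
    by (intro sum.cong refl) simp
  also have "\<dots> = K" using finite_Zpv_on[OF J(1)] p2 by simp
  finally show ?thesis using card_Zpv_on_pos[OF J(1), of p] p2 by (simp add: field_simps)
qed

lemma fourier_const_imp_delta:
  assumes p2: "p \<ge> 2" and J: "finite J" "J \<subseteq> {..<d}"
    and F: "\<forall>m\<in>Zpv_on p J. (\<Sum>x\<in>Zpv_on p J. F x * chi p (dotp d x m)) = K"
    and y: "y \<in> Zpv_on p J" "y \<noteq> (\<lambda>i. 0)"
  shows "F y = 0"
proof -
  have zero: "(\<lambda>i. 0) \<in> Zpv_on p J" using p2 by simp
  have "- dotp d y m = dotp d m (\<lambda>i. 0 - y i)" for m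
    by (simp add: dotp_def sum_negf mult.commute)
  then have "of_nat (card (Zpv_on p J)) * F y
      = K * (\<Sum>m\<in>Zpv_on p J. chi p (dotp d m (\<lambda>i. 0 - y i)))"
    using fourier_inversion[OF p2 J y(1), of F] F by (simp add: sum_distrib_left)
  also have "\<dots> = 0"
    using sum_chi_dotp[OF p2 J] Zpv_on_eq_iff_dvd[OF zero y(1)] y(2) by auto
  finally show ?thesis using card_Zpv_on_pos[OF J(1), of p] p2 by simp
qed

definition fourier ::
    "nat \<Rightarrow> nat \<Rightarrow> (nat \<Rightarrow> int) set \<Rightarrow> ((nat \<Rightarrow> int) \<Rightarrow> complex) \<Rightarrow> (nat \<Rightarrow> int) \<Rightarrow> complex" where
  "fourier p d S f m = (\<Sum>x\<in>S. f x * chi p (- dotp d x m))"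

definition autocorr ::
    "nat \<Rightarrow> (nat \<Rightarrow> int) set \<Rightarrow> ((nat \<Rightarrow> int) \<Rightarrow> complex) \<Rightarrow> (nat \<Rightarrow> int) \<Rightarrow> complex" where
  "autocorr p S f u = (\<Sum>x\<in>S. f (vsub p x u) * cnj (f x))"

lemma autocorr_zero:
  "autocorr p (Zpv_on p J) f (\<lambda>i. 0) = of_real (\<Sum>x\<in>Zpv_on p J. (cmod (f x))\<^sup>2)"
  unfolding autocorr_def of_real_sum
  by (intro sum.cong refl) (simp add: vsub_zero, metis complex_norm_square of_real_power)

lemma fourier_autocorr:
  assumes p2: "p \<ge> 2" and m: "m \<in> Zpv_on p J"
  shows "(\<Sum>u\<in>Zpv_on p J. autocorr p (Zpv_on p J) f u * chi p (dotp d u m))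
       = fourier p d (Zpv_on p J) f m * cnj (fourier p d (Zpv_on p J) f m)"
proof -
  let ?S = "Zpv_on p J" and ?f = "fourier p d (Zpv_on p J) f m"
  have inner: "(\<Sum>u\<in>?S. f (vsub p x u) * chi p (dotp d u m)) = chi p (dotp d x m) * ?f"
    if x: "x \<in> ?S" for x
  proof -
    have "(\<Sum>u\<in>?S. f (vsub p x u) * chi p (dotp d u m))
        = (\<Sum>u\<in>?S. f (vsub p x u) * chi p (dotp d (vsub p x (vsub p x u)) m))"
      by (intro sum.cong refl) (simp add: vsub_vsub)
    also have "\<dots> = (\<Sum>v\<in>?S. f v * chi p (dotp d (vsub p x v) m))"
      using sum_vsub_reflect[OF _ x, of "\<lambda>v. f v * chi p (dotp d (vsub p x v) m)"] p2 by simp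
    also have "\<dots> = (\<Sum>v\<in>?S. chi p (dotp d x m) * (f v * chi p (- dotp d v m)))"
      using p2 by (intro sum.cong refl) (simp add: chi_dotp_vsub chi_add[symmetric] algebra_simps)
    also have "\<dots> = chi p (dotp d x m) * ?f" by (simp add: fourier_def sum_distrib_left)
    finally show ?thesis .
  qed
  have "(\<Sum>u\<in>?S. autocorr p ?S f u * chi p (dotp d u m))
      = (\<Sum>x\<in>?S. cnj (f x) * (\<Sum>u\<in>?S. f (vsub p x u) * chi p (dotp d u m)))"
    unfolding autocorr_def sum_distrib_right
    by (subst sum.swap) (simp add: sum_distrib_left mult_ac)
  also have "\<dots> = (\<Sum>x\<in>?S. ?f * (cnj (f x) * chi p (dotp d x m)))"
    by (intro sum.cong refl) (simp add: inner algebra_simps)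
  also have "\<dots> = ?f * cnj ?f"
    by (simp add: fourier_def sum_distrib_left cnj_chi)
  finally show ?thesis .
qed

lemma autocorr_delta_iff_fourier_norm_const:
  assumes p2: "p \<ge> 2" and J: "finite J" "J \<subseteq> {..<d}"
  shows "(\<forall>u\<in>Zpv_on p J. u \<noteq> (\<lambda>i. 0) \<longrightarrow> autocorr p (Zpv_on p J) f u = 0)
     \<longleftrightarrow> (\<exists>C::real. \<forall>m\<in>Zpv_on p J. cmod (fourier p d (Zpv_on p J) f m) = C)"
proof
  let ?S = "Zpv_on p J" and ?r = "autocorr p (Zpv_on p J) f"
  assume delta: "\<forall>u\<in>?S. u \<noteq> (\<lambda>i. 0) \<longrightarrow> ?r u = 0"
  have "cmod (fourier p d ?S f m) = sqrt (cmod (?r (\<lambda>i. 0)))" if m: "m \<in> ?S" for m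
  proof -
    have "(\<Sum>u\<in>?S. ?r u * chi p (dotp d u m)) = (\<Sum>u\<in>?S. if u = (\<lambda>i. 0) then ?r (\<lambda>i. 0) else 0)"
      using delta by (intro sum.cong refl) (auto simp: dotp_def)
    also have "\<dots> = ?r (\<lambda>i. 0)" using p2 finite_Zpv_on[OF J(1)] by simp
    finally have "of_real ((cmod (fourier p d ?S f m))\<^sup>2) = ?r (\<lambda>i. 0)"
      using fourier_autocorr[OF p2 m, of f d] complex_norm_square[of "fourier p d ?S f m"] by simp
    then have "(cmod (fourier p d ?S f m))\<^sup>2 = cmod (?r (\<lambda>i. 0))"
      by (metis norm_of_real abs_power2)
    then show ?thesis by (simp add: real_sqrt_unique)
  qed
  then show "\<exists>C::real. \<forall>m\<in>?S. cmod (fourier p d ?S f m) = C" by blast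
next
  let ?S = "Zpv_on p J" and ?r = "autocorr p (Zpv_on p J) f"
  assume "\<exists>C::real. \<forall>m\<in>?S. cmod (fourier p d ?S f m) = C"
  then obtain C where C: "\<forall>m\<in>?S. cmod (fourier p d ?S f m) = C" by blast
  have "\<forall>m\<in>?S. (\<Sum>u\<in>?S. ?r u * chi p (dotp d u m)) = of_real (C\<^sup>2)"
    using C fourier_autocorr[OF p2] by (simp flip: complex_norm_square)
  then show "\<forall>u\<in>?S. u \<noteq> (\<lambda>i. 0) \<longrightarrow> ?r u = 0"
    using fourier_const_imp_delta[OF p2 J] by blast
qed

lemma sum_translates_eq_autocorr:
  assumes p2: "p \<ge> 2" and a: "a \<in> Zpv_on p J" and a': "a' \<in> Zpv_on p J"
  shows "(\<Sum>x\<in>Zpv_on p J. f (vsub p x a) * cnj (f (vsub p x a')))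
       = autocorr p (Zpv_on p J) f (vsub p a a')"
proof -
  have "(\<Sum>x\<in>Zpv_on p J. f (vsub p x a) * cnj (f (vsub p x a')))
      = (\<Sum>z\<in>Zpv_on p J. f (vsub p (vadd p z a') a) * cnj (f (vsub p (vadd p z a') a')))"
    using sum_vadd_shift[OF _ a', of "\<lambda>x. f (vsub p x a) * cnj (f (vsub p x a'))"] p2 by simp
  also have "\<dots> = autocorr p (Zpv_on p J) f (vsub p a a')"
    unfolding autocorr_def
  proof (intro sum.cong refl)
    fix z assume z: "z \<in> Zpv_on p J"
    have "vsub p (vadd p z a') a = vsub p z (vsub p a a')"
      by (auto simp: vsub_def vadd_def mod_diff_left_eq mod_diff_right_eq algebra_simps)
    then show "f (vsub p (vadd p z a') a) * cnj (f (vsub p (vadd p z a') a'))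
             = f (vsub p z (vsub p a a')) * cnj (f z)"
      using vsub_vadd[OF z] by simp
  qed
  finally show ?thesis .
qed

lemma sum_reflections_eq_autocorr:
  assumes p2: "p \<ge> 2" and x: "x \<in> Zpv_on p J" and y: "y \<in> Zpv_on p J"
  shows "(\<Sum>a\<in>Zpv_on p J. f (vsub p x a) * cnj (f (vsub p y a)))
       = autocorr p (Zpv_on p J) f (vsub p y x)"
proof -
  have "(\<Sum>a\<in>Zpv_on p J. f (vsub p x a) * cnj (f (vsub p y a)))
      = (\<Sum>a\<in>Zpv_on p J. f (vsub p x (vsub p y (vsub p y a))) * cnj (f (vsub p y a)))"
    by (intro sum.cong refl) (simp add: vsub_vsub)
  also have "\<dots> = (\<Sum>z\<in>Zpv_on p J. f (vsub p x (vsub p y z)) * cnj (f z))"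
    using sum_vsub_reflect[OF _ y, of "\<lambda>z. f (vsub p x (vsub p y z)) * cnj (f z)"] p2 by simp
  also have "\<dots> = autocorr p (Zpv_on p J) f (vsub p y x)"
    unfolding autocorr_def
  proof (intro sum.cong refl)
    fix z
    have "vsub p x (vsub p y z) = vsub p z (vsub p y x)"
      by (auto simp: vsub_def mod_diff_right_eq algebra_simps)
    then show "f (vsub p x (vsub p y z)) * cnj (f z) = f (vsub p z (vsub p y x)) * cnj (f z)"
      by simp
  qed
  finally show ?thesis .
qed

definition vlow :: "nat \<Rightarrow> (nat \<Rightarrow> int) \<Rightarrow> (nat \<Rightarrow> int)" where
  "vlow k x = (\<lambda>i. if i < k then x i else 0)"

definition vhigh :: "nat \<Rightarrow> (nat \<Rightarrow> int) \<Rightarrow> (nat \<Rightarrow> int)" where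
  "vhigh k x = (\<lambda>i. if i < k then 0 else x i)"

definition fiber ::
    "nat \<Rightarrow> ((nat \<Rightarrow> int) \<Rightarrow> complex) \<Rightarrow> (nat \<Rightarrow> int) \<Rightarrow> (nat \<Rightarrow> int) \<Rightarrow> complex" where
  "fiber p g x2 = (\<lambda>x1. g (vadd p x1 x2))"

lemma Zpv_low_eq: "k \<le> d \<Longrightarrow> p > 0 \<Longrightarrow> {a \<in> Zpv p d. \<forall>i\<ge>k. a i = 0} = Zpv_on p {..<k}"
  unfolding Zpv_def Zpv_on_def by auto

lemma Zpv_high_eq: "p > 0 \<Longrightarrow> {b \<in> Zpv p d. \<forall>i<k. b i = 0} = Zpv_on p {k..<d}"
  unfolding Zpv_def Zpv_on_def by auto

lemma vadd_low_high:
  assumes "x1 \<in> Zpv_on p {..<k}" "x2 \<in> Zpv_on p {k..<d}"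
  shows "vadd p x1 x2 = (\<lambda>i. x1 i + x2 i)"
proof
  fix i
  show "vadd p x1 x2 i = x1 i + x2 i"
    using assms Zpv_on_mod[OF assms(1), of i] Zpv_on_mod[OF assms(2), of i]
    by (cases "i < k") (auto simp: vadd_def Zpv_on_def)
qed

lemma vadd_low_high_in_Zpv_on:
  assumes "k \<le> d" "x1 \<in> Zpv_on p {..<k}" "x2 \<in> Zpv_on p {k..<d}"
  shows "vadd p x1 x2 \<in> Zpv_on p {..<d}"
proof -
  have "0 \<le> x1 i + x2 i \<and> x1 i + x2 i < int p" if "i < d" for i
    using assms that by (cases "i < k") (auto simp: Zpv_on_def)
  then show ?thesis using assms by (auto simp: vadd_low_high Zpv_on_def)
qed

lemma vlow_in_Zpv_on: "k \<le> d \<Longrightarrow> x \<in> Zpv_on p {..<d} \<Longrightarrow> vlow k x \<in> Zpv_on p {..<k}"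
  by (auto simp: Zpv_on_def vlow_def)

lemma vhigh_in_Zpv_on: "x \<in> Zpv_on p {..<d} \<Longrightarrow> vhigh k x \<in> Zpv_on p {k..<d}"
  by (auto simp: Zpv_on_def vhigh_def)

lemma vadd_vlow_vhigh: "x \<in> Zpv_on p {..<d} \<Longrightarrow> vadd p (vlow k x) (vhigh k x) = x"
  by (auto simp: vlow_def vhigh_def vadd_def fun_eq_iff Zpv_on_mod)

lemma vlow_vadd: "x1 \<in> Zpv_on p {..<k} \<Longrightarrow> x2 \<in> Zpv_on p {k..<d} \<Longrightarrow> vlow k (vadd p x1 x2) = x1"
  by (simp add: vadd_low_high) (auto simp: Zpv_on_def vlow_def fun_eq_iff)

lemma vhigh_vadd: "x1 \<in> Zpv_on p {..<k} \<Longrightarrow> x2 \<in> Zpv_on p {k..<d} \<Longrightarrow> vhigh k (vadd p x1 x2) = x2"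
  by (simp add: vadd_low_high) (auto simp: Zpv_on_def vhigh_def fun_eq_iff)

lemma sum_Zpv_on_split:
  assumes "k \<le> d"
  shows "(\<Sum>x\<in>Zpv_on p {..<d}. h x) = (\<Sum>x1\<in>Zpv_on p {..<k}. \<Sum>x2\<in>Zpv_on p {k..<d}. h (vadd p x1 x2))"
proof -
  have "(\<Sum>x\<in>Zpv_on p {..<d}. h x)
      = (\<Sum>z\<in>Zpv_on p {..<k} \<times> Zpv_on p {k..<d}. h (vadd p (fst z) (snd z)))"
    by (rule sum.reindex_bij_witness[where j="\<lambda>x. (vlow k x, vhigh k x)"
          and i="\<lambda>z. vadd p (fst z) (snd z)"])
       (use assms in \<open>auto simp: vlow_in_Zpv_on vhigh_in_Zpv_on vadd_vlow_vhigh vlow_vadd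
          vhigh_vadd vadd_low_high_in_Zpv_on\<close>)
  then show ?thesis by (simp add: sum.cartesian_product case_prod_beta)
qed

lemma vsub_vadd_low_high:
  assumes "x1 \<in> Zpv_on p {..<k}" "a \<in> Zpv_on p {..<k}" "x2 \<in> Zpv_on p {k..<d}"
  shows "vsub p (vadd p x1 x2) a = vadd p (vsub p x1 a) x2"
proof
  fix i
  show "vsub p (vadd p x1 x2) a i = vadd p (vsub p x1 a) x2 i"
    using assms by (cases "i < k")
      (auto simp: vsub_def vadd_def Zpv_on_def mod_diff_left_eq mod_add_left_eq)
qed

lemma dotp_vadd_low_high:
  assumes "x1 \<in> Zpv_on p {..<k}" "x2 \<in> Zpv_on p {k..<d}" "b \<in> Zpv_on p {k..<d}"
  shows "dotp d (vadd p x1 x2) b = dotp d x2 b"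
  unfolding dotp_def vadd_low_high[OF assms(1,2)]
proof (intro sum.cong refl)
  fix i
  show "(x1 i + x2 i) * b i = x2 i * b i"
    using assms by (cases "i < k") (auto simp: Zpv_on_def)
qed

lemma gabor_inner:
  assumes p2: "p \<ge> 2" and kd: "k \<le> d"
    and a: "a \<in> Zpv_on p {..<k}" and a': "a' \<in> Zpv_on p {..<k}"
    and b: "b \<in> Zpv_on p {k..<d}" and b': "b' \<in> Zpv_on p {k..<d}"
  shows "l2inner (Zpv_on p {..<d}) (gabor_atom p d g a b) (gabor_atom p d g a' b')
    = (\<Sum>x2\<in>Zpv_on p {k..<d}. autocorr p (Zpv_on p {..<k}) (fiber p g x2) (vsub p a a')
         * chi p (dotp d x2 b - dotp d x2 b'))"
proof -
  let ?A = "Zpv_on p {..<k}" and ?B = "Zpv_on p {k..<d}"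
  have "l2inner (Zpv_on p {..<d}) (gabor_atom p d g a b) (gabor_atom p d g a' b')
     = (\<Sum>x1\<in>?A. \<Sum>x2\<in>?B. gabor_atom p d g a b (vadd p x1 x2)
                             * cnj (gabor_atom p d g a' b' (vadd p x1 x2)))"
    unfolding l2inner_def by (rule sum_Zpv_on_split[OF kd])
  also have "\<dots> = (\<Sum>x2\<in>?B. \<Sum>x1\<in>?A. fiber p g x2 (vsub p x1 a) * cnj (fiber p g x2 (vsub p x1 a'))
                       * chi p (dotp d x2 b - dotp d x2 b'))"
    by (subst sum.swap, intro sum.cong refl)
       (simp add: gabor_atom_def fiber_def vsub_vadd_low_high[OF _ a] vsub_vadd_low_high[OF _ a']
          dotp_vadd_low_high[OF _ _ b] dotp_vadd_low_high[OF _ _ b'] cnj_chi chi_add[symmetric] mult_ac)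
  also have "\<dots> = (\<Sum>x2\<in>?B. autocorr p ?A (fiber p g x2) (vsub p a a')
         * chi p (dotp d x2 b - dotp d x2 b'))"
    by (simp add: sum_distrib_right[symmetric] sum_translates_eq_autocorr[OF p2 a a'])
  finally show ?thesis .
qed

lemma gabor_kernel:
  assumes p2: "p \<ge> 2" and kd: "k \<le> d"
    and x: "x \<in> Zpv_on p {..<d}" and y: "y \<in> Zpv_on p {..<d}"
  shows "(\<Sum>(a, b)\<in>Zpv_on p {..<k} \<times> Zpv_on p {k..<d}. gabor_atom p d g a b x * cnj (gabor_atom p d g a b y))
    = (if vhigh k x = vhigh k y
       then of_nat (card (Zpv_on p {k..<d})) * autocorr p (Zpv_on p {..<k}) (fiber p g (vhigh k x)) (vsub p (vlow k y) (vlow k x))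
       else 0)"
proof -
  let ?A = "Zpv_on p {..<k}" and ?B = "Zpv_on p {k..<d}"
  define x1 x2 y1 y2 where "x1 = vlow k x" "x2 = vhigh k x" "y1 = vlow k y" "y2 = vhigh k y"
  have x1: "x1 \<in> ?A" and y1: "y1 \<in> ?A" and x2: "x2 \<in> ?B" and y2: "y2 \<in> ?B"
    using x y kd by (auto simp: x1_x2_y1_y2_def vlow_in_Zpv_on vhigh_in_Zpv_on)
  have x_eq: "x = vadd p x1 x2" and y_eq: "y = vadd p y1 y2"
    using x y by (auto simp: x1_x2_y1_y2_def vadd_vlow_vhigh)
  have "(\<Sum>(a, b)\<in>?A \<times> ?B. gabor_atom p d g a b x * cnj (gabor_atom p d g a b y))
      = (\<Sum>a\<in>?A. \<Sum>b\<in>?B. fiber p g x2 (vsub p x1 a) * cnj (fiber p g y2 (vsub p y1 a))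
                       * chi p (dotp d b (\<lambda>i. x2 i - y2 i)))"
    unfolding sum.cartesian_product[symmetric]
    by (intro sum.cong refl)
      (simp add: gabor_atom_def fiber_def x_eq y_eq vsub_vadd_low_high[OF x1 _ x2]
          vsub_vadd_low_high[OF y1 _ y2] dotp_vadd_low_high[OF x1 x2] dotp_vadd_low_high[OF y1 y2]
          cnj_chi chi_add[symmetric] dotp_diff[symmetric] mult_ac)
  also have "\<dots> = (\<Sum>a\<in>?A. fiber p g x2 (vsub p x1 a) * cnj (fiber p g y2 (vsub p y1 a)))
                  * (\<Sum>b\<in>?B. chi p (dotp d b (\<lambda>i. x2 i - y2 i)))"
    by (simp add: sum_product)
  also have "(\<Sum>b\<in>?B. chi p (dotp d b (\<lambda>i. x2 i - y2 i))) = (if x2 = y2 then of_nat (card ?B) else 0)"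
    using sum_chi_dotp[OF p2 finite_atLeastLessThan _, of k d d "\<lambda>i. x2 i - y2 i"]
      Zpv_on_eq_iff_dvd[OF x2 y2] by (auto simp: subset_eq)
  finally show ?thesis
    using sum_reflections_eq_autocorr[OF p2 x1 y1, of "fiber p g x2"]
    unfolding x1_x2_y1_y2_def by auto
qed

lemma spanning_if_reproducing_kernel:
  fixes V :: "(nat \<Rightarrow> int) set" and e :: "'i \<Rightarrow> (nat \<Rightarrow> int) \<Rightarrow> complex"
  assumes V: "finite V"
    and kernel: "\<And>x y. x \<in> V \<Longrightarrow> y \<in> V \<Longrightarrow> (\<Sum>i\<in>I. e i x * cnj (e i y)) = (if x = y then 1 else 0)"
  shows "\<exists>c. \<forall>x\<in>V. f x = (\<Sum>i\<in>I. c i * e i x)"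
proof (intro exI ballI)
  fix x assume x: "x \<in> V"
  have "(\<Sum>i\<in>I. l2inner V f (e i) * e i x) = (\<Sum>y\<in>V. f y * (\<Sum>i\<in>I. e i x * cnj (e i y)))"
    unfolding l2inner_def sum_distrib_right sum_distrib_left by (subst sum.swap) (simp add: mult_ac)
  also have "\<dots> = (\<Sum>y\<in>V. if y = x then f x else 0)"
    by (intro sum.cong refl) (auto simp: kernel[OF x])
  also have "\<dots> = f x" using x V by simp
  finally show "f x = (\<Sum>i\<in>I. l2inner V f (e i) * e i x)" by simp
qed

lemma gabor_orthonormal_imp_autocorr:
  assumes p2: "p \<ge> 2" and kd: "k \<le> d"
    and orthonormal: "\<forall>i\<in>Zpv_on p {..<k} \<times> Zpv_on p {k..<d}. \<forall>j\<in>Zpv_on p {..<k} \<times> Zpv_on p {k..<d}.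
      l2inner (Zpv_on p {..<d}) ((\<lambda>(a, b). gabor_atom p d g a b) i) ((\<lambda>(a, b). gabor_atom p d g a b) j)
      = (if i = j then 1 else 0)"
    and x2: "x2 \<in> Zpv_on p {k..<d}" and u: "u \<in> Zpv_on p {..<k}"
  shows "autocorr p (Zpv_on p {..<k}) (fiber p g x2) u
       = (if u = (\<lambda>i. 0) then 1 / of_nat (card (Zpv_on p {k..<d})) else 0)"
proof -
  let ?A = "Zpv_on p {..<k}" and ?B = "Zpv_on p {k..<d}"
  have zero: "(\<lambda>i. 0) \<in> ?A" "(\<lambda>i. 0) \<in> ?B" using p2 by auto
  \<comment> \<open>pairing with the atom at the origin: the transform in \<open>x\<^sub>2\<close> is a delta, so the function is constant\<close>
  have "\<forall>b\<in>?B. (\<Sum>x2\<in>?B. autocorr p ?A (fiber p g x2) u * chi p (dotp d x2 b))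
              = (if b = (\<lambda>i. 0) then (if u = (\<lambda>i. 0) then 1 else 0) else 0)"
  proof
    fix b assume b: "b \<in> ?B"
    have "(\<Sum>x2\<in>?B. autocorr p ?A (fiber p g x2) u * chi p (dotp d x2 b))
        = l2inner (Zpv_on p {..<d}) (gabor_atom p d g u b) (gabor_atom p d g (\<lambda>i. 0) (\<lambda>i. 0))"
      using gabor_inner[OF p2 kd u zero(1) b zero(2)] by (simp add: vsub_zero[OF u])
    also have "\<dots> = (if (u, b) = ((\<lambda>i. 0), (\<lambda>i. 0)) then 1 else 0)"
      using orthonormal u b zero by force
    finally show "(\<Sum>x2\<in>?B. autocorr p ?A (fiber p g x2) u * chi p (dotp d x2 b))
              = (if b = (\<lambda>i. 0) then (if u = (\<lambda>i. 0) then 1 else 0) else 0)" by auto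
  qed
  from fourier_delta_imp_const[OF p2 _ _ this x2] show ?thesis by (auto simp: subset_eq)
qed

lemma autocorr_imp_gabor_orthonormal:
  assumes p2: "p \<ge> 2" and kd: "k \<le> d"
    and autocorr: "\<forall>x2\<in>Zpv_on p {k..<d}. \<forall>u\<in>Zpv_on p {..<k}. autocorr p (Zpv_on p {..<k}) (fiber p g x2) u
       = (if u = (\<lambda>i. 0) then 1 / of_nat (card (Zpv_on p {k..<d})) else 0)"
    and a: "a \<in> Zpv_on p {..<k}" and a': "a' \<in> Zpv_on p {..<k}"
    and b: "b \<in> Zpv_on p {k..<d}" and b': "b' \<in> Zpv_on p {k..<d}"
  shows "l2inner (Zpv_on p {..<d}) (gabor_atom p d g a b) (gabor_atom p d g a' b')
       = (if (a, b) = (a', b') then 1 else 0)"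
proof -
  let ?B = "Zpv_on p {k..<d}"
  have "l2inner (Zpv_on p {..<d}) (gabor_atom p d g a b) (gabor_atom p d g a' b')
      = (if a = a' then 1 / of_nat (card ?B) * (\<Sum>x2\<in>?B. chi p (dotp d x2 (\<lambda>i. b i - b' i))) else 0)"
    using p2 autocorr by (simp add: gabor_inner[OF p2 kd a a' b b'] vsub_in_Zpv_on[OF _ a a']
        vsub_eq_0_iff[OF a a'] dotp_diff_right sum_distrib_left)
  also have "(\<Sum>x2\<in>?B. chi p (dotp d x2 (\<lambda>i. b i - b' i))) = (if b = b' then of_nat (card ?B) else 0)"
    using sum_chi_dotp[OF p2 finite_atLeastLessThan _, of k d d "\<lambda>i. b i - b' i"]
      Zpv_on_eq_iff_dvd[OF b b'] by (auto simp: subset_eq)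
  finally show ?thesis
    using card_Zpv_on_pos[OF finite_atLeastLessThan, of p k d] p2 by simp
qed

lemma autocorr_imp_gabor_kernel:
  assumes p2: "p \<ge> 2" and kd: "k \<le> d"
    and autocorr: "\<forall>x2\<in>Zpv_on p {k..<d}. \<forall>u\<in>Zpv_on p {..<k}. autocorr p (Zpv_on p {..<k}) (fiber p g x2) u
       = (if u = (\<lambda>i. 0) then 1 / of_nat (card (Zpv_on p {k..<d})) else 0)"
    and x: "x \<in> Zpv_on p {..<d}" and y: "y \<in> Zpv_on p {..<d}"
  shows "(\<Sum>(a, b)\<in>Zpv_on p {..<k} \<times> Zpv_on p {k..<d}. gabor_atom p d g a b x * cnj (gabor_atom p d g a b y))
       = (if x = y then 1 else 0)"
proof -
  have low: "vlow k x \<in> Zpv_on p {..<k}" "vlow k y \<in> Zpv_on p {..<k}"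
    using x y kd by (auto simp: vlow_in_Zpv_on)
  have "x = y \<longleftrightarrow> vlow k x = vlow k y \<and> vhigh k x = vhigh k y"
    using vadd_vlow_vhigh[OF x, of k] vadd_vlow_vhigh[OF y, of k] by metis
  then show ?thesis
    using gabor_kernel[OF p2 kd x y, of g] autocorr vhigh_in_Zpv_on[OF x, of k]
      vsub_in_Zpv_on[OF _ low(2,1)] vsub_eq_0_iff[OF low(2,1)] p2
      card_Zpv_on_pos[OF finite_atLeastLessThan, of p k d]
    by auto
qed

lemma gabor_onb_iff_autocorr_delta:
  assumes p2: "p \<ge> 2" and kd: "k \<le> d"
  shows "is_onb (Zpv_on p {..<d}) (Zpv_on p {..<k} \<times> Zpv_on p {k..<d}) (\<lambda>(a, b). gabor_atom p d g a b)
    \<longleftrightarrow> (\<forall>x2\<in>Zpv_on p {k..<d}. \<forall>u\<in>Zpv_on p {..<k}.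
           u \<noteq> (\<lambda>i. 0) \<longrightarrow> autocorr p (Zpv_on p {..<k}) (fiber p g x2) u = 0)
      \<and> (\<forall>x2\<in>Zpv_on p {k..<d}.
           (\<Sum>x1\<in>Zpv_on p {..<k}. (cmod (g (vadd p x1 x2)))\<^sup>2) = 1 / real (card (Zpv_on p {k..<d})))"
  (is "is_onb ?V (?A \<times> ?B) ?e \<longleftrightarrow> ?off_zero \<and> ?at_zero")
proof -
  let ?autocorr = "\<forall>x2\<in>?B. \<forall>u\<in>?A. autocorr p ?A (fiber p g x2) u
    = (if u = (\<lambda>i. 0) then 1 / of_nat (card ?B) else 0)"
  have at_zero: "autocorr p ?A (fiber p g x2) (\<lambda>i. 0) = 1 / of_nat (card ?B)
      \<longleftrightarrow> (\<Sum>x1\<in>?A. (cmod (g (vadd p x1 x2)))\<^sup>2) = 1 / real (card ?B)" for x2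
  proof -
    have "(1 / of_nat (card ?B) :: complex) = of_real (1 / real (card ?B))" by simp
    then show ?thesis unfolding autocorr_zero fiber_def by (simp only: of_real_eq_iff)
  qed
  have "(\<lambda>i. 0) \<in> ?A" using p2 by simp
  then have delta_split: "(\<forall>x2\<in>?B. \<forall>u\<in>?A. R x2 u = (if u = (\<lambda>i. 0) then c else 0))
      \<longleftrightarrow> (\<forall>x2\<in>?B. \<forall>u\<in>?A. u \<noteq> (\<lambda>i. 0) \<longrightarrow> R x2 u = 0) \<and> (\<forall>x2\<in>?B. R x2 (\<lambda>i. 0) = c)"
    for R :: "(nat \<Rightarrow> int) \<Rightarrow> (nat \<Rightarrow> int) \<Rightarrow> complex" and c
    by (auto simp del: zero_in_Zpv_on)
  have "?autocorr \<longleftrightarrow> ?off_zero \<and> ?at_zero"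
    unfolding delta_split at_zero ..
  moreover have "is_onb ?V (?A \<times> ?B) ?e \<longleftrightarrow> ?autocorr"
  proof
    assume "is_onb ?V (?A \<times> ?B) ?e"
    then show ?autocorr
      unfolding is_onb_def using gabor_orthonormal_imp_autocorr[OF p2 kd] by blast
  next
    assume autocorr: ?autocorr
    have kernel: "(\<Sum>i\<in>?A \<times> ?B. ?e i x * cnj (?e i y)) = (if x = y then 1 else 0)"
      if "x \<in> ?V" "y \<in> ?V" for x y
      using autocorr_imp_gabor_kernel[OF p2 kd autocorr that] by (simp add: case_prod_beta)
    show "is_onb ?V (?A \<times> ?B) ?e"
      unfolding is_onb_def
      using autocorr_imp_gabor_orthonormal[OF p2 kd autocorr]
        spanning_if_reproducing_kernel[OF finite_Zpv_on[OF finite_lessThan] kernel]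
      by auto
  qed
  ultimately show ?thesis by blast
qed

lemma const_iff_eq_average:
  fixes E :: "'a \<Rightarrow> real"
  assumes "finite B" "B \<noteq> {}" "sum E B = 1"
  shows "(\<exists>C. \<forall>x\<in>B. E x = C) \<longleftrightarrow> (\<forall>x\<in>B. E x = 1 / real (card B))"
proof
  assume "\<exists>C. \<forall>x\<in>B. E x = C"
  then obtain C where C: "\<forall>x\<in>B. E x = C" by blast
  with assms(3) have "real (card B) * C = 1" by simp
  then have "C = 1 / real (card B)"
    using assms(1,2) by (simp add: field_simps)
  with C show "\<forall>x\<in>B. E x = 1 / real (card B)" by simp
qed blast

theorem theorem1p6:
  fixes p d k :: nat and g :: "(nat \<Rightarrow> int) \<Rightarrow> complex"
  assumes "prime p" and "d \<ge> 2" and "1 \<le> k" and "k < d"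
    and "(\<Sum>x\<in>Zpv p d. (cmod (g x))\<^sup>2) = 1"
  shows "gabor_onb p d g {a \<in> Zpv p d. \<forall>i\<ge>k. a i = 0} {b \<in> Zpv p d. \<forall>i<k. b i = 0}
    \<longleftrightarrow>
    ((\<forall>x2\<in>{y \<in> Zpv p d. \<forall>i<k. y i = 0}. \<exists>C::real. \<forall>m\<in>{y \<in> Zpv p d. \<forall>i\<ge>k. y i = 0}.
        cmod (\<Sum>x1\<in>{y \<in> Zpv p d. \<forall>i\<ge>k. y i = 0}. g (vadd p x1 x2) * chi p (- dotp d x1 m)) = C)
     \<and>
     (\<exists>C::real. \<forall>x2\<in>{y \<in> Zpv p d. \<forall>i<k. y i = 0}.
        (\<Sum>x1\<in>{y \<in> Zpv p d. \<forall>i\<ge>k. y i = 0}. (cmod (g (vadd p x1 x2)))\<^sup>2) = C))"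
proof -
  have p2: "p \<ge> 2" using \<open>prime p\<close> prime_ge_2_nat by blast
  have kd: "k \<le> d" using \<open>k < d\<close> by simp
  let ?A = "Zpv_on p {..<k}" and ?B = "Zpv_on p {k..<d}"
  have sets: "{a \<in> Zpv p d. \<forall>i\<ge>k. a i = 0} = ?A" "{b \<in> Zpv p d. \<forall>i<k. b i = 0} = ?B"
    using Zpv_low_eq[OF kd] Zpv_high_eq p2 by auto
  have fourier_cond: "(\<forall>x2\<in>?B. \<exists>C::real. \<forall>m\<in>?A. cmod (\<Sum>x1\<in>?A. g (vadd p x1 x2) * chi p (- dotp d x1 m)) = C)
     \<longleftrightarrow> (\<forall>x2\<in>?B. \<forall>u\<in>?A. u \<noteq> (\<lambda>i. 0) \<longrightarrow> autocorr p ?A (fiber p g x2) u = 0)"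
    using autocorr_delta_iff_fourier_norm_const[OF p2, of "{..<k}" d] kd
    by (simp add: fourier_def fiber_def)
  have B: "finite ?B" "?B \<noteq> {}"
    using finite_Zpv_on[OF finite_atLeastLessThan, of p k d] card_Zpv_on_pos[OF finite_atLeastLessThan, of p k d] p2
    by auto
  have "(\<Sum>x2\<in>?B. \<Sum>x1\<in>?A. (cmod (g (vadd p x1 x2)))\<^sup>2) = 1"
    using assms(5) unfolding Zpv_eq_Zpv_on sum_Zpv_on_split[OF kd] by (subst sum.swap) simp
  then have energy_cond: "(\<exists>C::real. \<forall>x2\<in>?B. (\<Sum>x1\<in>?A. (cmod (g (vadd p x1 x2)))\<^sup>2) = C)
     \<longleftrightarrow> (\<forall>x2\<in>?B. (\<Sum>x1\<in>?A. (cmod (g (vadd p x1 x2)))\<^sup>2) = 1 / real (card ?B))"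
    by (rule const_iff_eq_average[OF B])
  show ?thesis
    unfolding gabor_onb_def sets
    unfolding Zpv_eq_Zpv_on gabor_onb_iff_autocorr_delta[OF p2 kd] fourier_cond energy_cond ..
qed
end
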